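(* Let $\mathcal{X}=\{1,\ldots,d\}$, let $\mathcal{S}$ be the probability simplex in $\mathbb{R}^d$, and let $p\mapsto\Gamma(p)$ be a Lipschitz continuous map from $\mathcal{S}$ into the $d\times d$ rate matrices on $\mathcal{X}$. Let $\pi^*\in\mathcal{S}$ satisfy $\pi^*\Gamma(\pi^* )=0$, and suppose $\Gamma(\pi^* )$ is irreducible. For $\lambda\in[0,1]$ and $p\in\mathcal{S}$ set $\Gamma^\lambda(p)=\Gamma(\lambda(p-\pi^* )+\pi^* )$, and for an arbitrary initial condition $p^\lambda(0)\in\mathcal{S}$ let $p^\lambda(\cdot)$ be the solution of $$\frac{d}{dt}p^\lambda(t)=p^\lambda(t)\Gamma^\lambda(p^\lambda(t)).$$ Let $\bar F(p)=R(p\|\pi^* )=\sum_{x\in\mathcal{X}}p_x\log(p_x/\pi^*_x)$. Then there is $\lambda_0\in(0,1]$ such that if $\lambda\in[0,\lambda_0]$, then for all $t\ge0$ $$\frac{d}{dt}\bar F(p^\lambda(t))\le 0,$$ with strict inequality if and only if $p^\lambda(t)\ne\pi^*$.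
   Context: A rate matrix on $\mathcal{X}$ is a $d\times d$ real matrix with nonnegative off-diagonal entries and zero row sums; probability vectors are row vectors. $\Gamma(\pi^* )$ is irreducible if all states of $\mathcal{X}$ communicate under the Markov chain with rate matrix $\Gamma(\pi^* )$. The convention $0\log 0=0$ is used in the relative entropy. *)

theory Defs
  imports "HOL-Analysis.Analysis"
begin

text \<open>State space X = index type 'n (finite). Probability vectors are row vectors real^'n;
  matrices are real^'n^'n with Q$x$y the entry in row x, column y.\<close>

definition prob_simplex :: "(real ^ 'n::finite) set" where
  "prob_simplex = {p. (\<forall>x. 0 \<le> p $ x) \<and> (\<Sum>x\<in>UNIV. p $ x) = 1}"

definition rate_matrix :: "real ^ 'n::finite ^ 'n \<Rightarrow> bool" where
  "rate_matrix Q \<longleftrightarrow> (\<forall>x y. x \<noteq> y \<longrightarrow> 0 \<le> Q $ x $ y) \<and> (\<forall>x. (\<Sum>y\<in>UNIV. Q $ x $ y) = 0)"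

definition jump_rel :: "real ^ 'n::finite ^ 'n \<Rightarrow> ('n \<times> 'n) set" where
  "jump_rel Q = {(x, y). x \<noteq> y \<and> 0 < Q $ x $ y}"

definition irreducible_rate :: "real ^ 'n::finite ^ 'n \<Rightarrow> bool" where
  "irreducible_rate Q \<longleftrightarrow> (\<forall>x y. (x, y) \<in> (jump_rel Q)\<^sup>*)"

definition rel_entropy :: "real ^ 'n::finite \<Rightarrow> real ^ 'n \<Rightarrow> real" where
  "rel_entropy p q = (\<Sum>x\<in>UNIV. if p $ x = 0 then 0 else p $ x * ln (p $ x / q $ x))"

end

theory Submission
  imports Defs
begin

text \<open>
  Write \<open>p = r \<pi>\<close> coordinatewise and let \<open>Q = \<Gamma>\<^sup>\<lambda>(p)\<close>. The entropy production
  \<open>\<Sum>y. (p Q) y * ln (r y)\<close> equals the defect \<open>\<Sum>y. r y * (\<pi> Q) y\<close> minus the dissipation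
  \<open>\<Sum>x y. \<pi> x * Q x y * \<psi> (r x) (r y)\<close>, where
  \<open>\<psi> a b = b - a - a ln (b / a) \<ge> (b - a)\<^sup>2 / (2 max a b)\<close>.
  For small \<open>\<lambda>\<close>, \<open>Q\<close> keeps the jump rates of \<open>\<Gamma>(\<pi>)\<close> bounded below, so the dissipation
  dominates the energy \<open>\<Sum> (r y - r x)\<^sup>2\<close> over the jumps \<open>(x, y)\<close> of \<open>\<Gamma>(\<pi>)\<close>.
  Since \<open>\<pi> \<Gamma>(\<pi>) = 0\<close>, Lipschitz continuity gives \<open>|\<pi> Q| \<le> L \<lambda> |p - \<pi>|\<close>, and by
  irreducibility both \<open>|p - \<pi>|\<close> and \<open>|r - 1|\<close> are bounded by the square root of the energy
  times the length of connecting paths; hence the defect is \<open>O(\<lambda>)\<close> times the energy and is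
  absorbed. On the boundary of the simplex some empty state is fed by an occupied neighbour,
  and the derivative is \<open>-\<infinity>\<close>.
\<close>

section \<open>Elementary inequalities\<close>

lemma ln_le_sub_one_sub_half_sq:
  fixes u :: real
  assumes "0 < u" "u \<le> 1"
  shows "ln u \<le> (u - 1) - (u - 1)^2 / 2"
proof -
  define g where "g u = ln u - (u - 1) + (u - 1)^2 / 2" for u :: real
  have "g u \<le> g 1"
  proof (rule DERIV_nonneg_imp_nondecreasing[OF assms(2)])
    fix x assume "u \<le> x" "x \<le> 1"
    then have x: "0 < x" using assms by auto
    have "(g has_real_derivative (x - 1)^2 / x) (at x)"
      unfolding g_def using x
      by (auto intro!: derivative_eq_intros simp: field_simps power2_eq_square)
    then show "\<exists>y. (g has_real_derivative y) (at x) \<and> 0 \<le> y" using x by auto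
  qed
  then show ?thesis unfolding g_def by simp
qed

lemma ln_le_half_sub_inverse:
  fixes u :: real
  assumes "1 \<le> u"
  shows "ln u \<le> (u - 1 / u) / 2"
proof -
  define g where "g u = (u - 1 / u) / 2 - ln u" for u :: real
  have "g 1 \<le> g u"
  proof (rule DERIV_nonneg_imp_nondecreasing[OF assms])
    fix x assume "1 \<le> x" "x \<le> u"
    then have x: "0 < x" by auto
    have "(g has_real_derivative (x - 1)^2 / (2 * x^2)) (at x)"
      unfolding g_def using x
      by (auto intro!: derivative_eq_intros simp: field_simps power2_eq_square)
    then show "\<exists>y. (g has_real_derivative y) (at x) \<and> 0 \<le> y" using x by auto
  qed
  then show ?thesis unfolding g_def by simp
qed

lemma ln_diff_quadratic_bound:
  fixes a b :: real
  assumes "0 < a" "0 < b"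
  shows "(b - a)^2 / (2 * max a b) \<le> b - a - a * (ln b - ln a)"
proof -
  define u where "u = b / a"
  have u: "0 < u" "b = a * u" "ln b - ln a = ln u"
    using assms by (auto simp: u_def ln_div)
  have "(u - 1)^2 / (2 * max 1 u) \<le> u - 1 - ln u"
  proof (cases "u \<le> 1")
    case True
    then show ?thesis using ln_le_sub_one_sub_half_sq[OF u(1)] by simp
  next
    case False
    then have "(u - 1)^2 / (2 * max 1 u) = u - 1 - (u - 1 / u) / 2"
      using u(1) by (simp add: field_simps power2_eq_square)
    then show ?thesis using ln_le_half_sub_inverse[of u] False by linarith
  qed
  then have "a * ((u - 1)^2 / (2 * max 1 u)) \<le> a * (u - 1 - ln u)"
    using assms by (intro mult_left_mono) auto
  moreover have "(b - a)^2 / (2 * max a b) = a * ((u - 1)^2 / (2 * max 1 u))"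
  proof -
    have "max a b = a * max 1 u" using u assms by (simp add: max_def)
    moreover have "0 < max 1 u" by simp
    ultimately show ?thesis using u assms by (simp add: field_simps power2_eq_square)
  qed
  ultimately show ?thesis using u by (simp add: algebra_simps)
qed

lemma finite_pos_lower_bound:
  fixes f :: "'a \<Rightarrow> real"
  assumes "finite A" "\<forall>x\<in>A. 0 < f x"
  shows "\<exists>m>0. \<forall>x\<in>A. m \<le> f x"
  using assms by (intro exI[of _ "Min (insert 1 (f ` A))"]) auto

lemma exists_scale_with_small_product:
  fixes L a b c :: real
  assumes "0 \<le> L" "0 < a" "0 \<le> b" "0 < c"
  shows "\<exists>lam0>0. lam0 \<le> 1 \<and> (\<forall>lam. 0 \<le> lam \<and> lam \<le> lam0 \<longrightarrow> L * lam \<le> a \<and> b * (L * lam) < c)"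
proof -
  define e where "e = min a (c / (b + 1))"
  have e: "0 < e" "e \<le> a" "b * e < c"
  proof -
    have "b * e \<le> b * (c / (b + 1))"
      using assms by (intro mult_left_mono) (auto simp: e_def)
    also have "\<dots> < c"
      using assms by (simp add: field_simps)
    finally show "b * e < c" .
  qed (use assms in \<open>auto simp: e_def\<close>)
  show ?thesis
  proof (intro exI[of _ "min 1 (e / (L + 1))"] conjI allI impI)
    fix lam assume lam: "0 \<le> lam \<and> lam \<le> min 1 (e / (L + 1))"
    have "L * lam \<le> (L + 1) * (e / (L + 1))"
      using assms lam by (intro mult_mono) auto
    then have "L * lam \<le> e" using assms by simp
    then show "L * lam \<le> a" "b * (L * lam) < c"
      using e assms by (auto intro: order.strict_trans1 mult_left_mono)
  qed (use e assms in auto)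
qed

section \<open>Rate matrices and the probability simplex\<close>

lemma prob_simplex_affine_comb:
  assumes "p \<in> prob_simplex" "w \<in> prob_simplex" "0 \<le> lam" "lam \<le> (1::real)"
  shows "lam *\<^sub>R (p - w) + w \<in> prob_simplex"
proof -
  have "0 \<le> (lam *\<^sub>R (p - w) + w)$x" for x
  proof -
    have "(lam *\<^sub>R (p - w) + w)$x = lam * p$x + (1 - lam) * w$x"
      by (simp add: algebra_simps)
    then show ?thesis using assms by (simp add: prob_simplex_def)
  qed
  moreover have "(\<Sum>x\<in>UNIV. (lam *\<^sub>R (p - w) + w)$x) = 1"
    using assms by (simp add: prob_simplex_def sum.distrib sum_subtractf
        sum_distrib_left[symmetric] algebra_simps)
  ultimately show ?thesis by (simp add: prob_simplex_def)
qed

lemma prob_simplex_le_one: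
  assumes "p \<in> prob_simplex"
  shows "p$x \<le> 1"
proof -
  have "p$x \<le> (\<Sum>y\<in>UNIV. p$y)"
    using assms by (intro member_le_sum) (auto simp: prob_simplex_def)
  then show ?thesis using assms by (simp add: prob_simplex_def)
qed

lemma norm_le_one_if_prob_simplex:
  assumes "p \<in> prob_simplex"
  shows "norm p \<le> 1"
proof -
  have "norm p \<le> (\<Sum>x\<in>UNIV. \<bar>p$x\<bar>)" by (rule norm_le_l1_cart)
  also have "\<dots> = 1" using assms by (simp add: prob_simplex_def)
  finally show ?thesis .
qed

lemma abs_matrix_entry_le_norm: "\<bar>(A::real^'n::finite^'m::finite)$x$y\<bar> \<le> norm A"
  using component_le_norm_cart[of "A$x" y] Finite_Cartesian_Product.norm_nth_le[of A x] by linarith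

lemma abs_vector_matrix_mult_le_norm:
  fixes M :: "real^'n::finite^'n"
  assumes "w \<in> prob_simplex"
  shows "\<bar>(w v* M)$y\<bar> \<le> norm M"
proof -
  have "\<bar>(w v* M)$y\<bar> \<le> (\<Sum>x\<in>UNIV. \<bar>w$x * M$x$y\<bar>)"
    unfolding vector_matrix_mult_def by (simp add: sum_abs)
  also have "\<dots> \<le> (\<Sum>x\<in>UNIV. w$x * norm M)"
    using assms
    by (intro sum_mono) (auto simp: prob_simplex_def abs_mult intro!: mult_left_mono abs_matrix_entry_le_norm)
  also have "\<dots> = norm M"
    using assms by (simp add: prob_simplex_def sum_distrib_right[symmetric])
  finally show ?thesis .
qed

lemma sum_vector_matrix_mult_eq_0:
  fixes Q :: "real^'n::finite^'n"
  assumes "\<forall>x. (\<Sum>y\<in>UNIV. Q$x$y) = 0"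
  shows "(\<Sum>y\<in>UNIV. (v v* Q)$y) = 0"
proof -
  have "(\<Sum>y\<in>UNIV. (v v* Q)$y) = (\<Sum>y\<in>UNIV. \<Sum>x\<in>UNIV. v$x * Q$x$y)"
    unfolding vector_matrix_mult_def by simp
  also have "\<dots> = (\<Sum>x\<in>UNIV. v$x * (\<Sum>y\<in>UNIV. Q$x$y))"
    by (subst sum.swap) (simp add: sum_distrib_left)
  finally show ?thesis using assms by simp
qed

lemma vector_matrix_mult_pos_at_empty_state:
  fixes Q :: "real^'n::finite^'n"
  assumes "rate_matrix Q" "\<forall>x. 0 \<le> p$x" "p$b = 0" "0 < p$a" "0 < Q$a$b"
  shows "0 < (p v* Q)$b"
proof -
  have "0 \<le> p$v * Q$v$b" for v
    using assms by (cases "v = b") (auto simp: rate_matrix_def)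
  then have "p$a * Q$a$b \<le> (\<Sum>v\<in>UNIV. p$v * Q$v$b)"
    by (intro member_le_sum) auto
  moreover have "0 < p$a * Q$a$b" using assms by simp
  ultimately show ?thesis by (simp add: vector_matrix_mult_def)
qed

lemma stationary_irreducible_pos:
  fixes Q :: "real^'n::finite^'n"
  assumes Q: "rate_matrix Q" and stat: "\<pi> v* Q = 0" and \<pi>: "\<pi> \<in> prob_simplex"
    and irr: "irreducible_rate Q"
  shows "0 < \<pi>$x"
proof (rule ccontr)
  assume "\<not> 0 < \<pi>$x"
  then have "\<pi>$x = 0" using \<pi> by (auto simp: prob_simplex_def intro: antisym)
  \<comment> \<open>Mass flowing into an empty state must vanish, so emptiness propagates backwards along jumps.\<close>
  have "\<pi>$w = 0" if "(w, x) \<in> (jump_rel Q)\<^sup>*" for w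
    using that
  proof (induction rule: converse_rtrancl_induct)
    case base
    show ?case by fact
  next
    case (step w y)
    then have wy: "w \<noteq> y" "0 < Q$w$y" by (auto simp: jump_rel_def)
    have nonneg: "\<forall>v\<in>UNIV. 0 \<le> \<pi>$v * Q$v$y"
    proof
      fix v
      show "0 \<le> \<pi>$v * Q$v$y"
        using Q \<pi> step.IH by (cases "v = y") (auto simp: rate_matrix_def prob_simplex_def)
    qed
    have "(\<Sum>v\<in>UNIV. \<pi>$v * Q$v$y) = (\<pi> v* Q)$y"
      by (simp add: vector_matrix_mult_def)
    then have "(\<Sum>v\<in>UNIV. \<pi>$v * Q$v$y) = 0" using stat by simp
    then have "\<pi>$w * Q$w$y = 0" using nonneg by (simp add: sum_nonneg_eq_0_iff)
    then show ?case using wy by simp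
  qed
  then have "\<pi>$w = 0" for w using irr unfolding irreducible_rate_def by blast
  then show False using \<pi> by (simp add: prob_simplex_def)
qed

lemma irreducible_boundary_edge:
  assumes p: "p \<in> prob_simplex" and z: "p$z = 0" and E: "\<forall>x y. (x, y) \<in> E\<^sup>*"
  shows "\<exists>a b. (a, b) \<in> E \<and> 0 < p$a \<and> p$b = 0"
proof -
  obtain a where a: "0 < p$a"
  proof (rule ccontr)
    assume "\<not> thesis"
    then have "\<forall>a. p$a = 0" using that p by (auto simp: prob_simplex_def intro: antisym not_less[THEN iffD1])
    then show False using p by (simp add: prob_simplex_def)
  qed
  have "(a, z) \<in> E\<^sup>*" using E by blast
  then show ?thesis
    using z
  proof (induction rule: rtrancl_induct)
    case base
    then show ?case using a by simp
  next
    case (step y w)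
    show ?case
    proof (cases "p$y = 0")
      case True
      then show ?thesis using step.IH by simp
    next
      case False
      then have "0 < p$y" using p by (auto simp: prob_simplex_def less_le)
      then show ?thesis using step by blast
    qed
  qed
qed

section \<open>Entropy production\<close>

definition edge_energy :: "('a \<times> 'a) set \<Rightarrow> ('a \<Rightarrow> real) \<Rightarrow> real" where
  "edge_energy E r = (\<Sum>(x, y)\<in>E. (r y - r x)^2)"

lemma edge_energy_nonneg: "0 \<le> edge_energy E r"
  unfolding edge_energy_def by (intro sum_nonneg) auto

lemma abs_diff_le_edge_energy_relpow:
  fixes r :: "'a \<Rightarrow> real"
  assumes "finite E" "(x, y) \<in> E ^^ k"
  shows "\<bar>r x - r y\<bar> \<le> real k * sqrt (edge_energy E r)"
  using assms(2)
proof (induction k arbitrary: y)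
  case 0
  then show ?case by simp
next
  case (Suc k)
  then obtain z where z: "(x, z) \<in> E ^^ k" "(z, y) \<in> E" by auto
  have "(\<lambda>(x, y). (r y - r x)^2) (z, y) \<le> edge_energy E r"
    unfolding edge_energy_def using assms(1) z(2) by (intro member_le_sum) auto
  then have "sqrt ((r y - r z)^2) \<le> sqrt (edge_energy E r)"
    by (intro real_sqrt_le_mono) simp
  then have "\<bar>r z - r y\<bar> \<le> sqrt (edge_energy E r)"
    by (simp add: abs_minus_commute)
  moreover have "\<bar>r x - r y\<bar> \<le> \<bar>r x - r z\<bar> + \<bar>r z - r y\<bar>" by simp
  ultimately show ?case using Suc.IH[OF z(1)] by (simp add: algebra_simps)
qed

lemma abs_sub_weighted_mean_le:
  fixes w r :: "'a \<Rightarrow> real"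
  assumes "finite A" "\<forall>x\<in>A. 0 \<le> w x" "sum w A = 1" "\<forall>x\<in>A. \<bar>r y - r x\<bar> \<le> c"
  shows "\<bar>r y - (\<Sum>x\<in>A. w x * r x)\<bar> \<le> c"
proof -
  have "r y - (\<Sum>x\<in>A. w x * r x) = (\<Sum>x\<in>A. w x * (r y - r x))"
    using assms(3) by (simp add: algebra_simps sum_subtractf sum_distrib_left[symmetric])
  also have "\<bar>\<dots>\<bar> \<le> (\<Sum>x\<in>A. w x * c)"
    using assms(2,4) by (intro order.trans[OF sum_abs] sum_mono) (simp add: abs_mult mult_left_mono)
  also have "\<dots> = c" using assms(3) by (simp add: sum_distrib_right[symmetric])
  finally show ?thesis .
qed

lemma sum_mult_le_of_sum_eq_0:
  fixes r w :: "'a \<Rightarrow> real"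
  assumes "sum w A = 0" "0 \<le> c" "\<forall>y\<in>A. \<bar>r y - 1\<bar> \<le> c" "\<forall>y\<in>A. \<bar>w y\<bar> \<le> K * c"
  shows "(\<Sum>y\<in>A. r y * w y) \<le> real (card A) * K * c^2"
proof -
  have "(\<Sum>y\<in>A. r y * w y) = (\<Sum>y\<in>A. (r y - 1) * w y)"
    using assms(1) by (simp add: algebra_simps sum_subtractf)
  also have "\<dots> \<le> (\<Sum>y\<in>A. c * (K * c))"
  proof (intro sum_mono)
    fix y assume "y \<in> A"
    then have "\<bar>r y - 1\<bar> * \<bar>w y\<bar> \<le> c * (K * c)"
      using assms(2-4) by (intro mult_mono) auto
    then show "(r y - 1) * w y \<le> c * (K * c)"
      by (metis abs_ge_self abs_mult order.trans)
  qed
  also have "\<dots> = real (card A) * K * c^2" by (simp add: power2_eq_square)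
  finally show ?thesis .
qed

lemma edge_energy_le_dissipation:
  fixes Q :: "real^'n::finite^'n" and \<pi> :: "real^'n" and r :: "'n \<Rightarrow> real"
  assumes Q: "\<forall>x y. x \<noteq> y \<longrightarrow> 0 \<le> Q$x$y" and \<pi>: "0 < m" "\<forall>x. m \<le> \<pi>$x"
    and E: "0 \<le> \<delta>" "\<forall>(x, y)\<in>E. \<delta> \<le> Q$x$y" and r: "\<forall>x. 0 < r x" "\<forall>x. r x \<le> 1 / m"
  shows "m^2 * \<delta> / 2 * edge_energy E r \<le>
    (\<Sum>x\<in>UNIV. \<Sum>y\<in>UNIV. \<pi>$x * Q$x$y * (r y - r x - r x * (ln (r y) - ln (r x))))"
proof -
  define \<psi> where "\<psi> x y = r y - r x - r x * (ln (r y) - ln (r x))" for x y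
  have \<pi>_nonneg: "0 \<le> \<pi>$x" for x using \<pi> by (meson less_imp_le order.trans)
  have \<psi>_ge: "(r y - r x)^2 * (m / 2) \<le> \<psi> x y" for x y
  proof -
    have max: "0 < max (r x) (r y)" "max (r x) (r y) \<le> 1 / m"
      using r by (auto simp: less_max_iff_disj)
    have "(r y - r x)^2 * (m / 2) = (r y - r x)^2 / (2 * (1 / m))" by simp
    also have "\<dots> \<le> (r y - r x)^2 / (2 * max (r x) (r y))"
      using max \<pi> by (intro divide_left_mono) auto
    also have "\<dots> \<le> \<psi> x y"
      unfolding \<psi>_def using r by (intro ln_diff_quadratic_bound) auto
    finally show ?thesis .
  qed
  have nonneg: "0 \<le> \<pi>$x * Q$x$y * \<psi> x y" for x y
  proof (cases "x = y")
    case False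
    have "0 \<le> (r y - r x)^2 * (m / 2)" using \<pi> by simp
    then have "0 \<le> \<psi> x y" using \<psi>_ge[where x = x and y = y] by linarith
    then show ?thesis using False Q \<pi>_nonneg[of x] by simp
  qed (simp add: \<psi>_def)
  have "m^2 * \<delta> / 2 * edge_energy E r = (\<Sum>(x, y)\<in>E. (m * \<delta>) * ((r y - r x)^2 * (m / 2)))"
    unfolding edge_energy_def by (simp add: sum_distrib_left case_prod_unfold power2_eq_square mult_ac)
  also have "\<dots> \<le> (\<Sum>(x, y)\<in>E. \<pi>$x * Q$x$y * \<psi> x y)"
  proof (intro sum_mono, clarify)
    fix x y assume "(x, y) \<in> E"
    then have weight: "m * \<delta> \<le> \<pi>$x * Q$x$y"
      using \<pi> E \<pi>_nonneg[of x] by (intro mult_mono) auto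
    have "0 \<le> m * \<delta>" using \<pi> E by simp
    then show "(m * \<delta>) * ((r y - r x)^2 * (m / 2)) \<le> \<pi>$x * Q$x$y * \<psi> x y"
      using \<pi> weight by (intro mult_mono[OF weight \<psi>_ge]) auto
  qed
  also have "\<dots> \<le> (\<Sum>(x, y)\<in>UNIV. \<pi>$x * Q$x$y * \<psi> x y)"
    by (intro sum_mono2) (auto simp: nonneg)
  also have "\<dots> = (\<Sum>x\<in>UNIV. \<Sum>y\<in>UNIV. \<pi>$x * Q$x$y * \<psi> x y)"
    by (simp add: sum.cartesian_product)
  finally show ?thesis unfolding \<psi>_def .
qed

lemma entropy_production_eq:
  fixes Q :: "real^'n::finite^'n" and p \<pi> :: "real^'n" and r :: "'n \<Rightarrow> real"
  assumes rows: "\<forall>x. (\<Sum>y\<in>UNIV. Q$x$y) = 0" and p: "\<forall>x. p$x = \<pi>$x * r x"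
  shows "(\<Sum>y\<in>UNIV. (p v* Q)$y * ln (r y)) =
    (\<Sum>y\<in>UNIV. r y * (\<pi> v* Q)$y) -
    (\<Sum>x\<in>UNIV. \<Sum>y\<in>UNIV. \<pi>$x * Q$x$y * (r y - r x - r x * (ln (r y) - ln (r x))))"
proof -
  have "(\<Sum>y\<in>UNIV. (p v* Q)$y * ln (r y)) = (\<Sum>y\<in>UNIV. \<Sum>x\<in>UNIV. \<pi>$x * r x * Q$x$y * ln (r y))"
    unfolding vector_matrix_mult_def by (simp add: sum_distrib_right p)
  also have "\<dots> = (\<Sum>x\<in>UNIV. \<Sum>y\<in>UNIV. \<pi>$x * r x * Q$x$y * ln (r y))"
    by (rule sum.swap)
  finally have flux: "(\<Sum>y\<in>UNIV. (p v* Q)$y * ln (r y)) = \<dots>" .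
  have "(\<Sum>y\<in>UNIV. r y * (\<pi> v* Q)$y) = (\<Sum>y\<in>UNIV. \<Sum>x\<in>UNIV. \<pi>$x * Q$x$y * r y)"
    unfolding vector_matrix_mult_def by (simp add: sum_distrib_left mult_ac)
  also have "\<dots> = (\<Sum>x\<in>UNIV. \<Sum>y\<in>UNIV. \<pi>$x * Q$x$y * r y)"
    by (rule sum.swap)
  finally have defect: "(\<Sum>y\<in>UNIV. r y * (\<pi> v* Q)$y) = \<dots>" .
  have zero: "(\<Sum>y\<in>UNIV. \<pi>$x * Q$x$y * a) = 0" for a x
    using rows by (simp add: sum_distrib_left[symmetric] sum_distrib_right[symmetric])
  have "\<pi>$x * Q$x$y * (r y - r x - r x * (ln (r y) - ln (r x))) =
      \<pi>$x * Q$x$y * r y - \<pi>$x * r x * Q$x$y * ln (r y)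
      - \<pi>$x * Q$x$y * r x + \<pi>$x * Q$x$y * (r x * ln (r x))" for x y
    by (simp add: algebra_simps)
  then show ?thesis
    unfolding flux defect by (simp add: sum_subtractf sum.distrib zero)
qed

lemma density_deviation_bounds:
  fixes p \<pi> :: "real^'n::finite" and r :: "'n \<Rightarrow> real"
  assumes \<pi>: "\<pi> \<in> prob_simplex" and p: "p \<in> prob_simplex" "\<forall>x. p$x = \<pi>$x * r x"
    and E: "\<forall>x y. \<exists>k\<le>N. (x, y) \<in> E ^^ k"
  shows "\<bar>r y - 1\<bar> \<le> real N * sqrt (edge_energy E r)"
    and "norm (p - \<pi>) \<le> real N * sqrt (edge_energy E r)"
proof -
  define c where "c = real N * sqrt (edge_energy E r)"
  have \<pi>_nonneg: "0 \<le> \<pi>$x" for x using \<pi> by (simp add: prob_simplex_def)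
  have osc: "\<bar>r y - r x\<bar> \<le> c" for x y
  proof -
    obtain k where "k \<le> N" "(y, x) \<in> E ^^ k" using E by blast
    then show ?thesis
      using abs_diff_le_edge_energy_relpow[of E y x k r] edge_energy_nonneg[of E r]
      unfolding c_def by (meson finite order.trans mult_right_mono of_nat_mono real_sqrt_ge_zero)
  qed
  have "(\<Sum>x\<in>UNIV. \<pi>$x * r x) = 1" using p by (simp add: prob_simplex_def)
  then show dev: "\<bar>r y - 1\<bar> \<le> c" for y
    using abs_sub_weighted_mean_le[of UNIV "\<lambda>x. \<pi>$x" r y c] \<pi> osc by (simp add: prob_simplex_def)
  have "\<bar>(p - \<pi>)$x\<bar> = \<pi>$x * \<bar>r x - 1\<bar>" for x
  proof -
    have "(p - \<pi>)$x = \<pi>$x * (r x - 1)" using p by (simp add: algebra_simps)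
    then show ?thesis using \<pi>_nonneg[of x] by (simp add: abs_mult)
  qed
  then have "norm (p - \<pi>) \<le> (\<Sum>x\<in>UNIV. \<pi>$x * \<bar>r x - 1\<bar>)"
    using norm_le_l1_cart[of "p - \<pi>"] by simp
  also have "\<dots> \<le> (\<Sum>x\<in>UNIV. \<pi>$x * c)"
    using \<pi>_nonneg dev by (intro sum_mono mult_left_mono) auto
  also have "\<dots> = c" using \<pi> by (simp add: prob_simplex_def sum_distrib_right[symmetric])
  finally show "norm (p - \<pi>) \<le> c" .
qed

lemma entropy_production_nonpos:
  fixes Q :: "real^'n::finite^'n" and p \<pi> :: "real^'n"
  assumes Q: "rate_matrix Q"
    and \<pi>: "\<pi> \<in> prob_simplex" "0 < m" "\<forall>x. m \<le> \<pi>$x"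
    and p: "p \<in> prob_simplex" "\<forall>x. 0 < p$x"
    and E: "0 < \<delta>" "\<forall>(x, y)\<in>E. \<delta> \<le> Q$x$y" "\<forall>x y. \<exists>k\<le>N. (x, y) \<in> E ^^ k"
    and defect: "0 \<le> K" "\<forall>y. \<bar>(\<pi> v* Q)$y\<bar> \<le> K * norm (p - \<pi>)"
    and small: "real CARD('n) * K * (real N)^2 < m^2 * \<delta> / 2"
  shows "(\<Sum>y\<in>UNIV. (p v* Q)$y * ln (p$y / \<pi>$y)) \<le> 0 \<and>
    ((\<Sum>y\<in>UNIV. (p v* Q)$y * ln (p$y / \<pi>$y)) < 0 \<longleftrightarrow> p \<noteq> \<pi>)"
proof -
  define r where "r x = p$x / \<pi>$x" for x
  define T where "T = edge_energy E r"
  define c where "c = real N * sqrt T"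
  have \<pi>_pos: "0 < \<pi>$x" for x using \<pi> by (meson less_le_trans)
  have p_eq: "\<forall>x. p$x = \<pi>$x * r x" using \<pi>_pos by (simp add: r_def less_imp_neq[symmetric])
  have T: "0 \<le> T" "c^2 = (real N)^2 * T" by (simp_all add: T_def c_def edge_energy_nonneg power_mult_distrib)
  have c0: "0 \<le> c" using T(1) by (simp add: c_def)
  note dev = density_deviation_bounds(1)[OF \<pi>(1) p(1) p_eq E(3), folded T_def c_def]
  note near = density_deviation_bounds(2)[OF \<pi>(1) p(1) p_eq E(3), folded T_def c_def]
  have "(\<Sum>y\<in>UNIV. r y * (\<pi> v* Q)$y) \<le> real CARD('n) * K * c^2"
    using Q defect near dev c0 order.trans[OF _ mult_left_mono[OF near]]
    by (intro sum_mult_le_of_sum_eq_0 sum_vector_matrix_mult_eq_0) (auto simp: rate_matrix_def c_def)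
  moreover have "m^2 * \<delta> / 2 * T \<le>
      (\<Sum>x\<in>UNIV. \<Sum>y\<in>UNIV. \<pi>$x * Q$x$y * (r y - r x - r x * (ln (r y) - ln (r x))))"
  proof (unfold T_def, rule edge_energy_le_dissipation)
    show "\<forall>x. r x \<le> 1 / m"
      using p \<pi> \<pi>_pos prob_simplex_le_one unfolding r_def by (meson frac_le zero_le_one less_imp_le)
  qed (use Q \<pi> E p \<pi>_pos in \<open>auto simp: rate_matrix_def r_def\<close>)
  moreover have "(\<Sum>y\<in>UNIV. (p v* Q)$y * ln (p$y / \<pi>$y)) =
      (\<Sum>y\<in>UNIV. r y * (\<pi> v* Q)$y) -
      (\<Sum>x\<in>UNIV. \<Sum>y\<in>UNIV. \<pi>$x * Q$x$y * (r y - r x - r x * (ln (r y) - ln (r x))))"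
    unfolding r_def[symmetric] using Q p_eq by (intro entropy_production_eq) (auto simp: rate_matrix_def)
  ultimately have bound: "(\<Sum>y\<in>UNIV. (p v* Q)$y * ln (p$y / \<pi>$y)) \<le>
      (real CARD('n) * K * (real N)^2 - m^2 * \<delta> / 2) * T"
    using T by (simp add: algebra_simps)
  have "T = 0 \<Longrightarrow> p = \<pi>"
    using dev p_eq by (simp add: c_def vec_eq_iff)
  then have "p \<noteq> \<pi> \<Longrightarrow> (\<Sum>y\<in>UNIV. (p v* Q)$y * ln (p$y / \<pi>$y)) < 0"
    using bound small T(1) by (smt (verit) mult_neg_pos)
  moreover have "p = \<pi> \<Longrightarrow> (\<Sum>y\<in>UNIV. (p v* Q)$y * ln (p$y / \<pi>$y)) = 0"
    using \<pi>_pos by (simp add: less_imp_neq[symmetric])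
  ultimately show ?thesis by force
qed

section \<open>Differentiating the relative entropy\<close>

lemma rel_entropy_eq: "rel_entropy p q = (\<Sum>x\<in>UNIV. p$x * ln (p$x / q$x))"
  unfolding rel_entropy_def by (intro sum.cong) auto

lemma has_real_derivative_vec_nth:
  assumes "(p has_vector_derivative v) (at t within S)"
  shows "((\<lambda>s. p s $ y) has_real_derivative v $ y) (at t within S)"
  using bounded_linear.has_vector_derivative[OF bounded_linear_vec_nth assms, of y]
  by (simp add: has_real_derivative_iff_has_vector_derivative)

lemma has_real_derivative_mult_ln_div:
  fixes g :: "real \<Rightarrow> real"
  assumes "(g has_real_derivative g') (at t within S)" "0 < g t" "0 < c"
  shows "((\<lambda>s. g s * ln (g s / c)) has_real_derivative g' * (ln (g t / c) + 1)) (at t within S)"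
proof -
  have "((\<lambda>s. g s * ln (g s / c)) has_real_derivative
      g' * ln (g t / c) + g t * (g' / c / (g t / c))) (at t within S)"
    using assms by (auto intro!: derivative_eq_intros)
  also have "g' * ln (g t / c) + g t * (g' / c / (g t / c)) = g' * (ln (g t / c) + 1)"
    using assms by (simp add: field_simps)
  finally show ?thesis .
qed

lemma has_real_derivative_rel_entropy:
  assumes "(p has_vector_derivative v) (at t within S)" "\<forall>y. 0 < p t $ y" "\<forall>y. 0 < \<pi> $ y"
  shows "((\<lambda>s. rel_entropy (p s) \<pi>) has_real_derivative
    (\<Sum>y\<in>UNIV. v $ y * (ln (p t $ y / \<pi> $ y) + 1))) (at t within S)"
  unfolding rel_entropy_eq using assms
  by (intro DERIV_sum has_real_derivative_mult_ln_div has_real_derivative_vec_nth) auto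

lemma DERIV_pos_at_zero_eventually_pos_right:
  fixes g :: "real \<Rightarrow> real"
  assumes "(g has_real_derivative g') (at t within S)" "g t = 0" "0 < g'" "\<forall>s\<in>S. 0 \<le> g s"
  shows "eventually (\<lambda>s. t < s \<and> 0 < g s) (at t within S)"
proof -
  have "((\<lambda>s. g s / (s - t)) \<longlongrightarrow> g') (at t within S)"
    using assms by (simp add: has_field_derivative_iff)
  then have "eventually (\<lambda>s. 0 < g s / (s - t)) (at t within S)"
    using assms(3) by (rule order_tendstoD(1))
  moreover have "eventually (\<lambda>s. s \<in> S) (at t within S)"
    by (simp add: eventually_at_filter)
  ultimately show ?thesis
    by eventually_elim (use assms(4) in \<open>auto simp: zero_less_divide_iff\<close>)
qed

lemma mult_ln_div_quotient_at_bot: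
  fixes g :: "real \<Rightarrow> real"
  assumes g: "(g has_real_derivative g') (at t within S)" "g t = 0" "0 < g'" "\<forall>s\<in>S. 0 \<le> g s"
    and c: "0 < c"
  shows "filterlim (\<lambda>s. (g s * ln (g s / c) - g t * ln (g t / c)) / (s - t)) at_bot (at t within S)"
proof -
  let ?F = "at t within S"
  have "(g \<longlongrightarrow> 0) ?F"
    using DERIV_continuous[OF g(1)] g(2) by (simp add: continuous_within)
  then have "((\<lambda>s. g s / c) \<longlongrightarrow> 0) ?F"
    using tendsto_divide[OF _ tendsto_const, of g 0 ?F c] c by simp
  moreover have "eventually (\<lambda>s. g s / c \<in> {0<..} - {0}) ?F"
    using DERIV_pos_at_zero_eventually_pos_right[OF g] by eventually_elim (use c in simp)
  ultimately have "filterlim (\<lambda>s. g s / c) (at_right 0) ?F"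
    by (rule filterlim_at_withinI)
  then have "filterlim (\<lambda>s. ln (g s / c)) at_bot ?F"
    by (rule filterlim_compose[OF ln_at_0])
  moreover have "((\<lambda>s. g s / (s - t)) \<longlongrightarrow> g') ?F"
    using g by (simp add: has_field_derivative_iff)
  ultimately have "filterlim (\<lambda>s. g s / (s - t) * ln (g s / c)) at_bot ?F"
    using g(3) by (intro filterlim_tendsto_pos_mult_at_bot)
  then show ?thesis using g(2) by simp
qed

lemma mult_ln_div_quotient_eventually_bounded_above:
  fixes g :: "real \<Rightarrow> real"
  assumes g: "(g has_real_derivative g') (at t within S)" "0 \<le> g t" "\<forall>s\<in>S. 0 \<le> g s"
    and c: "0 < c" and right: "eventually (\<lambda>s. t < s) (at t within S)"
  shows "\<exists>C. eventually (\<lambda>s. (g s * ln (g s / c) - g t * ln (g t / c)) / (s - t) \<le> C) (at t within S)"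
proof (cases "g t = 0")
  case False
  then have "((\<lambda>s. (g s * ln (g s / c) - g t * ln (g t / c)) / (s - t)) \<longlongrightarrow> g' * (ln (g t / c) + 1))
      (at t within S)"
    using has_real_derivative_mult_ln_div[OF g(1) _ c] g(2) by (simp add: has_field_derivative_iff)
  then have "eventually (\<lambda>s. (g s * ln (g s / c) - g t * ln (g t / c)) / (s - t) <
      g' * (ln (g t / c) + 1) + 1) (at t within S)"
    by (rule order_tendstoD(2)) simp
  then have "eventually (\<lambda>s. (g s * ln (g s / c) - g t * ln (g t / c)) / (s - t) \<le>
      g' * (ln (g t / c) + 1) + 1) (at t within S)"
    by eventually_elim simp
  then show ?thesis by blast
next
  case True
  have "(g \<longlongrightarrow> 0) (at t within S)"
    using DERIV_continuous[OF g(1)] True by (simp add: continuous_within)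
  then have "eventually (\<lambda>s. g s < c) (at t within S)"
    using c by (rule order_tendstoD(2))
  moreover have "eventually (\<lambda>s. s \<in> S) (at t within S)"
    by (simp add: eventually_at_filter)
  ultimately have "eventually (\<lambda>s. (g s * ln (g s / c) - g t * ln (g t / c)) / (s - t) \<le> 0) (at t within S)"
    using right
  proof eventually_elim
    case (elim s)
    then have "g s * ln (g s / c) \<le> 0"
      using g(3) c by (cases "g s = 0") (auto intro!: mult_nonneg_nonpos simp: ln_le_zero_iff)
    then show ?case using elim True by (simp add: divide_nonpos_pos)
  qed
  then show ?thesis by blast
qed

lemma rel_entropy_quotient_at_bot:
  assumes p: "(p has_vector_derivative v) (at t within S)" "\<forall>s\<in>S. p s \<in> prob_simplex"
    "p t \<in> prob_simplex"
    and b: "p t $ b = 0" "0 < v $ b" and \<pi>: "\<forall>y. 0 < \<pi> $ y"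
  shows "filterlim (\<lambda>s. (rel_entropy (p s) \<pi> - rel_entropy (p t) \<pi>) / (s - t)) at_bot (at t within S)"
proof -
  let ?F = "at t within S"
  define q where "q y s = (p s $ y * ln (p s $ y / \<pi> $ y) - p t $ y * ln (p t $ y / \<pi> $ y)) / (s - t)"
    for y s
  have deriv: "((\<lambda>s. p s $ y) has_real_derivative v $ y) ?F" for y
    using p(1) by (rule has_real_derivative_vec_nth)
  have nonneg: "\<forall>s\<in>S. 0 \<le> p s $ y" "0 \<le> p t $ y" for y
    using p(2,3) by (auto simp: prob_simplex_def)
  have "eventually (\<lambda>s. t < s) ?F"
    using DERIV_pos_at_zero_eventually_pos_right[OF deriv b nonneg(1)] by eventually_elim simp
  then have "\<exists>C. eventually (\<lambda>s. q y s \<le> C) ?F" for y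
    unfolding q_def using \<pi> nonneg
    by (intro mult_ln_div_quotient_eventually_bounded_above[OF deriv]) auto
  then obtain C where "\<forall>y. eventually (\<lambda>s. q y s \<le> C y) ?F"
    by metis
  then have "eventually (\<lambda>s. \<forall>y. q y s \<le> C y) ?F"
    by (intro eventually_all_finite) auto
  then have rest: "eventually (\<lambda>s. (\<Sum>y\<in>UNIV - {b}. q y s) \<le> (\<Sum>y\<in>UNIV - {b}. C y)) ?F"
    by eventually_elim (auto intro: sum_mono)
  have head: "filterlim (q b) at_bot ?F"
    unfolding q_def using \<pi> by (intro mult_ln_div_quotient_at_bot[OF deriv b nonneg(1)]) auto
  have "(rel_entropy (p s) \<pi> - rel_entropy (p t) \<pi>) / (s - t) = q b s + (\<Sum>y\<in>UNIV - {b}. q y s)" for s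
  proof -
    have "(rel_entropy (p s) \<pi> - rel_entropy (p t) \<pi>) / (s - t) = (\<Sum>y\<in>UNIV. q y s)"
      by (simp add: rel_entropy_eq q_def sum_subtractf[symmetric] sum_divide_distrib)
    then show ?thesis by (simp add: sum.remove)
  qed
  moreover have "filterlim (\<lambda>s. q b s + (\<Sum>y\<in>UNIV - {b}. q y s)) at_bot ?F"
    unfolding filterlim_at_bot
  proof
    fix Z
    have "eventually (\<lambda>s. q b s \<le> Z - (\<Sum>y\<in>UNIV - {b}. C y)) ?F"
      using head by (simp add: filterlim_at_bot)
    with rest show "eventually (\<lambda>s. q b s + (\<Sum>y\<in>UNIV - {b}. q y s) \<le> Z) ?F"
      by eventually_elim simp
  qed
  ultimately show ?thesis by simp
qed

section \<open>Dissipation along the perturbed flow\<close>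

lemma lipschitz_perturbed_generator:
  fixes \<Gamma> :: "real^'n::finite \<Rightarrow> real^'n^'n"
  assumes \<Gamma>: "L-lipschitz_on prob_simplex \<Gamma>" and \<pi>: "\<pi> \<in> prob_simplex" "\<pi> v* \<Gamma> \<pi> = 0"
    and p: "p \<in> prob_simplex" and lam: "0 \<le> lam" "lam \<le> 1"
  defines "q \<equiv> lam *\<^sub>R (p - \<pi>) + \<pi>"
  shows "q \<in> prob_simplex"
    and "\<bar>\<Gamma> q $ x $ y - \<Gamma> \<pi> $ x $ y\<bar> \<le> 2 * L * lam"
    and "\<bar>(\<pi> v* \<Gamma> q)$y\<bar> \<le> L * lam * norm (p - \<pi>)"
proof -
  show q: "q \<in> prob_simplex"
    unfolding q_def by (rule prob_simplex_affine_comb[OF p \<pi>(1) lam])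
  have "norm (\<Gamma> q - \<Gamma> \<pi>) \<le> L * dist q \<pi>"
    using lipschitz_onD[OF \<Gamma> q \<pi>(1)] by (simp add: dist_norm)
  also have "dist q \<pi> = lam * norm (p - \<pi>)"
    using lam by (simp add: q_def dist_norm)
  finally have close: "norm (\<Gamma> q - \<Gamma> \<pi>) \<le> L * lam * norm (p - \<pi>)"
    by (simp add: mult.assoc)
  have "norm (p - \<pi>) \<le> 2"
    using norm_triangle_ineq4[of p \<pi>] norm_le_one_if_prob_simplex[OF p]
      norm_le_one_if_prob_simplex[OF \<pi>(1)] by linarith
  then have "L * lam * norm (p - \<pi>) \<le> L * lam * 2"
    using lam lipschitz_on_nonneg[OF \<Gamma>] by (intro mult_left_mono) auto
  then have "L * lam * norm (p - \<pi>) \<le> 2 * L * lam"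
    by (simp add: algebra_simps)
  then show "\<bar>\<Gamma> q $ x $ y - \<Gamma> \<pi> $ x $ y\<bar> \<le> 2 * L * lam"
    using abs_matrix_entry_le_norm[of "\<Gamma> q - \<Gamma> \<pi>" x y] close by simp
  have "\<pi> v* \<Gamma> q = \<pi> v* (\<Gamma> q - \<Gamma> \<pi>)"
    using \<pi>(2) by (simp add: vector_matrix_mult_def vec_eq_iff sum_subtractf right_diff_distrib)
  then show "\<bar>(\<pi> v* \<Gamma> q)$y\<bar> \<le> L * lam * norm (p - \<pi>)"
    using abs_vector_matrix_mult_le_norm[OF \<pi>(1), of "\<Gamma> q - \<Gamma> \<pi>" y] close by simp
qed

lemma rel_entropy_dissipation:
  fixes Q :: "real^'n::finite^'n" and \<pi> :: "real^'n" and p :: "real \<Rightarrow> real^'n"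
  assumes Q: "rate_matrix Q"
    and \<pi>: "\<pi> \<in> prob_simplex" "0 < m" "\<forall>x. m \<le> \<pi>$x"
    and E: "0 < \<delta>" "\<forall>(x, y)\<in>E. \<delta> \<le> Q$x$y" "\<forall>x y. \<exists>k\<le>N. (x, y) \<in> E ^^ k"
    and defect: "0 \<le> K" "\<forall>y. \<bar>(\<pi> v* Q)$y\<bar> \<le> K * norm (p t - \<pi>)"
    and small: "real CARD('n) * K * (real N)^2 < m^2 * \<delta> / 2"
    and p: "\<forall>s\<in>S. p s \<in> prob_simplex" "t \<in> S" "(p has_vector_derivative (p t v* Q)) (at t within S)"
  shows "\<exists>D::ereal. ((\<lambda>s. ereal ((rel_entropy (p s) \<pi> - rel_entropy (p t) \<pi>) / (s - t))) \<longlongrightarrow> D)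
    (at t within S) \<and> D \<le> 0 \<and> (D < 0 \<longleftrightarrow> p t \<noteq> \<pi>)"
proof -
  have \<pi>_pos: "\<forall>y. 0 < \<pi>$y" using \<pi> by (meson less_le_trans)
  have pt: "p t \<in> prob_simplex" using p by blast
  show ?thesis
  proof (cases "\<forall>y. 0 < p t $ y")
    case True
    define G where "G = (\<Sum>y\<in>UNIV. (p t v* Q)$y * ln (p t $ y / \<pi> $ y))"
    have "(\<Sum>y\<in>UNIV. (p t v* Q)$y * (ln (p t $ y / \<pi> $ y) + 1)) = G"
      using sum_vector_matrix_mult_eq_0[of Q "p t"] Q
      by (simp add: G_def rate_matrix_def distrib_left sum.distrib)
    then have "((\<lambda>s. (rel_entropy (p s) \<pi> - rel_entropy (p t) \<pi>) / (s - t)) \<longlongrightarrow> G) (at t within S)"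
      using has_real_derivative_rel_entropy[OF p(3) True \<pi>_pos] by (simp add: has_field_derivative_iff)
    moreover have "G \<le> 0 \<and> (G < 0 \<longleftrightarrow> p t \<noteq> \<pi>)"
      unfolding G_def using Q \<pi> pt True E defect small by (rule entropy_production_nonpos)
    ultimately show ?thesis by (intro exI[of _ "ereal G"]) (simp add: tendsto_ereal)
  next
    case False
    then obtain z where "p t $ z = 0"
      using pt by (auto simp: prob_simplex_def not_less intro: antisym)
    moreover have "\<forall>x y. (x, y) \<in> E\<^sup>*" using E(3) relpow_imp_rtrancl by blast
    ultimately obtain a b where ab: "(a, b) \<in> E" "0 < p t $ a" "p t $ b = 0"
      using irreducible_boundary_edge[OF pt] by blast
    have "0 < (p t v* Q)$b"
      using Q pt ab E by (intro vector_matrix_mult_pos_at_empty_state) (auto simp: prob_simplex_def)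
    then have "filterlim (\<lambda>s. (rel_entropy (p s) \<pi> - rel_entropy (p t) \<pi>) / (s - t)) at_bot (at t within S)"
      using p pt ab(3) \<pi>_pos by (intro rel_entropy_quotient_at_bot) auto
    then have "((ereal \<circ> (\<lambda>s. (rel_entropy (p s) \<pi> - rel_entropy (p t) \<pi>) / (s - t))) \<longlongrightarrow> -\<infinity>)
        (at t within S)"
      unfolding ereal_tendsto_simps2(3) .
    moreover have "p t \<noteq> \<pi>" using ab(3) \<pi>_pos[rule_format, of b] by auto
    ultimately show ?thesis by (intro exI[of _ "-\<infinity>"]) (simp add: o_def)
  qed
qed

lemma rel_entropy_dissipation_near_equilibrium:
  fixes \<Gamma> :: "real^'n::finite \<Rightarrow> real^'n^'n" and p :: "real \<Rightarrow> real^'n"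
  assumes rate: "\<forall>p \<in> prob_simplex. rate_matrix (\<Gamma> p)" and L: "L-lipschitz_on prob_simplex \<Gamma>"
    and \<pi>: "\<pi> \<in> prob_simplex" "\<pi> v* \<Gamma> \<pi> = 0" "0 < m" "\<forall>x. m \<le> \<pi>$x"
    and E: "0 < \<delta>" "\<forall>(x, y)\<in>E. 2 * \<delta> \<le> \<Gamma> \<pi> $ x $ y" "\<forall>x y. \<exists>k\<le>N. (x, y) \<in> E ^^ k"
    and lam: "0 \<le> lam" "lam \<le> 1" "L * lam \<le> \<delta> / 2"
      "real CARD('n) * (real N)^2 * (L * lam) < m^2 * \<delta> / 2"
    and p: "\<forall>s\<in>S. p s \<in> prob_simplex" "t \<in> S"
      "(p has_vector_derivative (p t v* \<Gamma> (lam *\<^sub>R (p t - \<pi>) + \<pi>))) (at t within S)"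
  shows "\<exists>D::ereal. ((\<lambda>s. ereal ((rel_entropy (p s) \<pi> - rel_entropy (p t) \<pi>) / (s - t))) \<longlongrightarrow> D)
    (at t within S) \<and> D \<le> 0 \<and> (D < 0 \<longleftrightarrow> p t \<noteq> \<pi>)"
proof -
  define q where "q = lam *\<^sub>R (p t - \<pi>) + \<pi>"
  have "p t \<in> prob_simplex" using p by blast
  note perturbed = lipschitz_perturbed_generator[OF L \<pi>(1,2) this lam(1,2), folded q_def]
  have "\<forall>(x, y)\<in>E. \<delta> \<le> \<Gamma> q $ x $ y"
  proof clarify
    fix x y assume "(x, y) \<in> E"
    then have "2 * \<delta> \<le> \<Gamma> \<pi> $ x $ y" using E(2) by auto
    then show "\<delta> \<le> \<Gamma> q $ x $ y"
      using perturbed(2)[of x y] lam(3) by (simp add: abs_le_iff mult.assoc)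
  qed
  moreover have "rate_matrix (\<Gamma> q)" using rate perturbed(1) by blast
  moreover have "0 \<le> L * lam" using lam lipschitz_on_nonneg[OF L] by simp
  ultimately show ?thesis
    using \<pi> E(1,3) perturbed(3) lam(4) p unfolding q_def
    by (intro rel_entropy_dissipation) (auto simp: mult_ac)
qed

theorem proposition3p1:
  fixes \<Gamma> :: "real ^ 'n::finite \<Rightarrow> real ^ 'n ^ 'n"
    and \<pi> :: "real ^ 'n"
  assumes rate: "\<forall>p \<in> prob_simplex. rate_matrix (\<Gamma> p)"
    and lip: "\<exists>L. L-lipschitz_on prob_simplex \<Gamma>"
    and pi_S: "\<pi> \<in> prob_simplex"
    and stat: "\<pi> v* \<Gamma> \<pi> = 0"
    and irr: "irreducible_rate (\<Gamma> \<pi>)"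
  shows "\<exists>lam0. 0 < lam0 \<and> lam0 \<le> 1 \<and>
    (\<forall>lam p. 0 \<le> lam \<and> lam \<le> lam0 \<longrightarrow>
      (\<forall>t\<ge>0. p t \<in> prob_simplex) \<longrightarrow>
      (\<forall>t\<ge>0. (p has_vector_derivative (p t v* \<Gamma> (lam *\<^sub>R (p t - \<pi>) + \<pi>))) (at t within {0..})) \<longrightarrow>
      (\<forall>t\<ge>0. \<exists>D::ereal.
          ((\<lambda>s. ereal ((rel_entropy (p s) \<pi> - rel_entropy (p t) \<pi>) / (s - t))) \<longlongrightarrow> D)
            (at t within {0..})
          \<and> D \<le> 0 \<and> (D < 0 \<longleftrightarrow> p t \<noteq> \<pi>)))"
proof -
  obtain L where L: "L-lipschitz_on prob_simplex \<Gamma>" using lip by blast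
  define E where "E = jump_rel (\<Gamma> \<pi>)"
  have "0 < \<pi>$x" for x
    using rate pi_S stat irr by (intro stationary_irreducible_pos) auto
  then obtain m where m: "0 < m" "\<forall>x. m \<le> \<pi>$x"
    using finite_pos_lower_bound[of UNIV "\<lambda>x. \<pi>$x"] by auto
  obtain \<delta> where \<delta>: "0 < \<delta>" "\<forall>(x, y)\<in>E. 2 * \<delta> \<le> \<Gamma> \<pi> $ x $ y"
    using finite_pos_lower_bound[of E "\<lambda>(x, y). \<Gamma> \<pi> $ x $ y / 2"] by (force simp: E_def jump_rel_def)
  have N: "\<forall>x y. \<exists>k\<le>card E. (x, y) \<in> E ^^ k"
    using irr rtrancl_finite_eq_relpow[of E] by (auto simp: irreducible_rate_def E_def)
  obtain lam0 where lam0: "0 < lam0" "lam0 \<le> 1"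
    "\<forall>lam. 0 \<le> lam \<and> lam \<le> lam0 \<longrightarrow> L * lam \<le> \<delta> / 2 \<and>
      real CARD('n) * (real (card E))^2 * (L * lam) < m^2 * \<delta> / 2"
    using exists_scale_with_small_product[OF lipschitz_on_nonneg[OF L], of "\<delta> / 2"
        "real CARD('n) * (real (card E))^2" "m^2 * \<delta> / 2"] m(1) \<delta>(1) by auto
  show ?thesis
  proof (intro exI[of _ lam0] conjI allI impI)
    fix lam t :: real and p :: "real \<Rightarrow> real ^ 'n"
    assume "0 \<le> lam \<and> lam \<le> lam0" "\<forall>t\<ge>0. p t \<in> prob_simplex"
      "\<forall>t\<ge>0. (p has_vector_derivative (p t v* \<Gamma> (lam *\<^sub>R (p t - \<pi>) + \<pi>))) (at t within {0..})"
      "0 \<le> t"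
    then show "\<exists>D::ereal. ((\<lambda>s. ereal ((rel_entropy (p s) \<pi> - rel_entropy (p t) \<pi>) / (s - t))) \<longlongrightarrow> D)
        (at t within {0..}) \<and> D \<le> 0 \<and> (D < 0 \<longleftrightarrow> p t \<noteq> \<pi>)"
      using lam0 m \<delta> N
      by (intro rel_entropy_dissipation_near_equilibrium[OF rate L pi_S stat, where lam = lam]) auto
  qed (use lam0 in auto)
qed

end
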